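(* Let $(X,d)$ be a metric space with $|X|\geqslant 3$ and let $T\colon X\to X$ be a generalized Ćirić–Reich–Rus type mapping, i.e. there exist $\alpha,\lambda\geqslant 0$ with $2\alpha+\frac{3\lambda}{2}<1$ such that $$d(Tx,Ty)+d(Ty,Tz)+d(Tx,Tz)\leqslant \alpha\big(d(x,y)+d(y,z)+d(z,x)\big)+\lambda\big(d(x,Tx)+d(y,Ty)+d(z,Tz)\big)$$ for all pairwise distinct $x,y,z\in X$. Then $T$ is continuous at each of its fixed points. *)

theory Defs
  imports "HOL-Analysis.Analysis"
begin

definition gen_CRR :: "('a::metric_space \<Rightarrow> 'a) \<Rightarrow> bool" where
  "gen_CRR T \<longleftrightarrow> (\<exists>alpha lam::real. alpha \<ge> 0 \<and> lam \<ge> 0 \<and> 2 * alpha + 3 * lam / 2 < 1 \<and>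
     (\<forall>x y z. x \<noteq> y \<and> y \<noteq> z \<and> x \<noteq> z \<longrightarrow>
        dist (T x) (T y) + dist (T y) (T z) + dist (T x) (T z)
        \<le> alpha * (dist x y + dist y z + dist z x)
           + lam * (dist x (T x) + dist y (T y) + dist z (T z))))"

end

theory Submission
  imports Defs
begin

text \<open>
  Let \<open>x\<close> be a fixed point of \<open>T\<close>. If \<open>x\<close> is isolated, continuity at \<open>x\<close> is trivial;
  otherwise, for \<open>y \<noteq> x\<close> pick \<open>z \<noteq> x\<close> closer to \<open>x\<close> than \<open>y\<close>. The contraction inequality
  for the triple \<open>x, y, z\<close>, bounded by the triangle inequality through \<open>x = T x\<close>, gives
  \<open>(1 - lam) d(Ty, x) \<le> 2 (2 alpha + lam) d(y, x)\<close>, so \<open>T\<close> is Lipschitz at \<open>x\<close>.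
\<close>

lemma fixed_point_triple_bound:
  fixes T :: "'a::metric_space \<Rightarrow> 'a" and alpha lam :: real
  assumes "alpha \<ge> 0" "lam \<ge> 0" "T x = x"
    and contr: "dist (T x) (T y) + dist (T y) (T z) + dist (T x) (T z)
        \<le> alpha * (dist x y + dist y z + dist z x) + lam * (dist x (T x) + dist y (T y) + dist z (T z))"
  shows "(1 - lam) * (dist (T y) x + dist (T z) x) \<le> (2 * alpha + lam) * (dist y x + dist z x)"
proof -
  have "alpha * (dist x y + dist y z + dist z x) \<le> alpha * (2 * dist y x + 2 * dist z x)"
    using \<open>alpha \<ge> 0\<close> dist_triangle3[of y z x] by (intro mult_left_mono) (auto simp: dist_commute)
  moreover have "lam * (dist x (T x) + dist y (T y) + dist z (T z))
      \<le> lam * (dist y x + dist (T y) x + dist z x + dist (T z) x)"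
    using \<open>lam \<ge> 0\<close> \<open>T x = x\<close> dist_triangle3[of y "T y" x] dist_triangle3[of z "T z" x]
    by (intro mult_left_mono) (auto simp: dist_commute)
  ultimately have "dist (T y) x + dist (T z) x
      \<le> alpha * (2 * dist y x + 2 * dist z x) + lam * (dist y x + dist (T y) x + dist z x + dist (T z) x)"
    using contr \<open>T x = x\<close> by (simp add: dist_commute) (smt (verit) zero_le_dist)
  then show ?thesis
    by (simp add: algebra_simps)
qed

lemma gen_CRR_Lipschitz_at_fixed_point:
  fixes T :: "'a::metric_space \<Rightarrow> 'a"
  assumes "gen_CRR T" "T x = x" "x islimpt UNIV"
  obtains K where "\<And>y. dist (T y) x \<le> K * dist y x"
proof -
  obtain alpha lam :: real where "alpha \<ge> 0" "lam \<ge> 0" "2 * alpha + 3 * lam / 2 < 1"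
    and contr: "\<And>x y z. x \<noteq> y \<Longrightarrow> y \<noteq> z \<Longrightarrow> x \<noteq> z \<Longrightarrow>
        dist (T x) (T y) + dist (T y) (T z) + dist (T x) (T z)
        \<le> alpha * (dist x y + dist y z + dist z x) + lam * (dist x (T x) + dist y (T y) + dist z (T z))"
    using \<open>gen_CRR T\<close> unfolding gen_CRR_def by blast
  have "1 - lam > 0"
    using \<open>alpha \<ge> 0\<close> \<open>2 * alpha + 3 * lam / 2 < 1\<close> by linarith
  have "dist (T y) x \<le> (2 * (2 * alpha + lam) / (1 - lam)) * dist y x" for y
  proof (cases "y = x")
    case False
    then obtain z where "z \<noteq> x" "dist z x < dist y x"
      using \<open>x islimpt UNIV\<close> unfolding islimpt_approachable by (metis zero_less_dist_iff)
    then have "z \<noteq> y"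
      by auto
    have "(1 - lam) * dist (T y) x \<le> (1 - lam) * (dist (T y) x + dist (T z) x)"
      using \<open>1 - lam > 0\<close> by simp
    also have "\<dots> \<le> (2 * alpha + lam) * (dist y x + dist z x)"
      using \<open>z \<noteq> x\<close> \<open>z \<noteq> y\<close> False
      by (intro fixed_point_triple_bound \<open>alpha \<ge> 0\<close> \<open>lam \<ge> 0\<close> \<open>T x = x\<close> contr) auto
    also have "\<dots> \<le> (2 * alpha + lam) * (2 * dist y x)"
      using \<open>alpha \<ge> 0\<close> \<open>lam \<ge> 0\<close> \<open>dist z x < dist y x\<close> by (intro mult_left_mono) auto
    finally show ?thesis
      using \<open>1 - lam > 0\<close> by (simp add: field_simps)
  qed (simp add: \<open>T x = x\<close>)
  then show thesis
    by (rule that)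
qed

theorem proposition3p4:
  fixes T :: "'a::metric_space \<Rightarrow> 'a"
  assumes "infinite (UNIV :: 'a set) \<or> card (UNIV :: 'a set) \<ge> 3"
    and "gen_CRR T"
  shows "\<forall>x. T x = x \<longrightarrow> isCont T x"
proof (intro allI impI)
  fix x
  assume "T x = x"
  show "isCont T x"
  proof (cases "x islimpt UNIV")
    case True
    then obtain K where K: "\<And>y. dist (T y) x \<le> K * dist y x"
      using gen_CRR_Lipschitz_at_fixed_point \<open>gen_CRR T\<close> \<open>T x = x\<close> by blast
    have lim: "((\<lambda>y. K * dist y x) \<longlongrightarrow> 0) (at x)"
      using tendsto_dist_iff[THEN iffD1, OF tendsto_ident_at] by (rule tendsto_mult_right_zero)
    have "((\<lambda>y. dist (T y) x) \<longlongrightarrow> 0) (at x)"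
      by (rule Lim_null_comparison[OF always_eventually lim]) (simp add: K)
    then show ?thesis
      using \<open>T x = x\<close> tendsto_dist_iff unfolding isCont_def by metis
  next
    case False
    then have "at x = bot"
      by (simp add: trivial_limit_within)
    then show ?thesis
      by simp
  qed
qed

end
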